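(* Let $m,n\ge1$. An $(m+2)$-angulation of the once-punctured polygon $P_n^\bullet$ exists if and only if $n=m\ell$ for some integer $\ell\ge1$. If $n=m\ell$, then for every $(m+2)$-angulation $T$ of $P_n^\bullet$, the complement $P_n^\bullet\setminus T$ has exactly $\ell$ connected components.
   Context: $P_n^\bullet$ is a disc with $n$ marked points on its boundary and one marked point $\bullet$ (the puncture) in its interior. An arc is a non-self-intersecting curve with endpoints at marked points, interior avoiding marked points, up to isotopy, not isotopic to a boundary segment or contractible; arcs are non-crossing if they have non-crossing representatives. An $(m+2)$-angulation of $P_n^\bullet$ is a set $T$ of pairwise non-crossing arcs such that every connected component of $P_n^\bullet\setminus T$ is an $(m+2)$-gon (sides counted with multiplicity). *)

theory Defs
  imports Complex_Main
begin

text \<open>Combinatorial model of the once-punctured polygon P_n with boundary marked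
points 0,...,n-1 (counterclockwise) and the puncture in the interior.

Isotopy classes of arcs:
  Ch i k  (i < n, 2 <= k <= n): arc between boundary points i and (i+k) mod n such that
          the side NOT containing the puncture contains exactly the k boundary segments
          going counterclockwise from i to i+k (k = n: the loop at i enclosing the puncture);
  Sp i    (i < n): the arc from boundary point i to the puncture.
Crossing is computed in the universal cover of the punctured disc (boundary = integer line,
the puncture at infinity): Ch i k lifts to the intervals [i+tn, i+k+tn], Sp j to rays at j+sn.\<close>

datatype arc = Ch nat nat | Sp nat

definition is_arc :: "nat \<Rightarrow> arc \<Rightarrow> bool" where
  "is_arc n a = (case a of Ch i k \<Rightarrow> i < n \<and> 2 \<le> k \<and> k \<le> n | Sp i \<Rightarrow> i < n)"

fun crosses :: "nat \<Rightarrow> arc \<Rightarrow> arc \<Rightarrow> bool" where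
  "crosses n (Ch i k) (Ch j l) =
     (\<exists>s t :: int. let a = int i + t * int n; b = a + int k;
                       c = int j + s * int n; d = c + int l
                   in (a < c \<and> c < b \<and> b < d) \<or> (c < a \<and> a < d \<and> d < b))"
| "crosses n (Ch i k) (Sp j) = (\<exists>s :: int. int i < int j + s * int n \<and> int j + s * int n < int i + int k)"
| "crosses n (Sp j) (Ch i k) = (\<exists>s :: int. int i < int j + s * int n \<and> int j + s * int n < int i + int k)"
| "crosses n (Sp i) (Sp j) = False"

text \<open>The embedded graph formed by the boundary segments and the arcs of T, encoded as a
combinatorial map. Darts (oriented edges) with the interior face on their left:
  Out i d : leaves boundary point i; d > 0 runs along Ch i d (d = 1: boundary segment i -> i+1),
            d < 0 runs backwards along the chord Ch ((i+d) mod n) (-d);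
  Up i / Down i : the spoke Sp i towards / away from the puncture.\<close>

datatype vtx = V nat | Pu

datatype dart = Out nat int | Up nat | Down nat

definition bmod :: "nat \<Rightarrow> int \<Rightarrow> nat" where
  "bmod n x = nat (x mod int n)"

fun dhead :: "nat \<Rightarrow> dart \<Rightarrow> vtx" where
  "dhead n (Out i d) = V (bmod n (int i + d))"
| "dhead n (Up i) = Pu"
| "dhead n (Down i) = V i"

fun dsrc :: "dart \<Rightarrow> vtx" where
  "dsrc (Out i d) = V i"
| "dsrc (Up i) = V i"
| "dsrc (Down i) = Pu"

fun drev :: "nat \<Rightarrow> dart \<Rightarrow> dart" where
  "drev n (Out i d) = Out (bmod n (int i + d)) (- d)"
| "drev n (Up i) = Down i"
| "drev n (Down i) = Up i"

text \<open>Angular key at a boundary vertex (counterclockwise = increasing key): boundary segment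
forward, chords to i+2,...,i+n, the spoke, chords from i-n,...,i-2, boundary segment backward.\<close>
fun dkey :: "dart \<Rightarrow> real" where
  "dkey (Out i d) = - 1 / of_int d"
| "dkey (Up i) = 0"
| "dkey (Down i) = 0"

definition darts :: "nat \<Rightarrow> arc set \<Rightarrow> dart set" where
  "darts n T =
     {Out i 1 | i. i < n}
     \<union> {Out i (int k) | i k. Ch i k \<in> T}
     \<union> {Out (bmod n (int i + int k)) (- int k) | i k. Ch i k \<in> T}
     \<union> {Up i | i. Sp i \<in> T} \<union> {Down i | i. Sp i \<in> T}"

text \<open>Directions at boundary vertex v (including the backward boundary segment).\<close>
definition rot :: "nat \<Rightarrow> arc set \<Rightarrow> nat \<Rightarrow> dart set" where
  "rot n T v = {e \<in> darts n T. dsrc e = V v} \<union> {Out v (-1)}"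

text \<open>Face-tracing permutation: after arriving at a vertex, continue along the next
edge in clockwise order from the edge one arrived on.\<close>
definition nxt :: "nat \<Rightarrow> arc set \<Rightarrow> dart \<Rightarrow> dart" where
  "nxt n T d =
     (case dhead n d of
        V v \<Rightarrow> (THE x. x \<in> rot n T v \<and> dkey x < dkey (drev n d) \<and>
                    (\<forall>y \<in> rot n T v. dkey y < dkey (drev n d) \<longrightarrow> dkey y \<le> dkey x))
      | Pu \<Rightarrow> (case d of
                 Up i \<Rightarrow> Down (if (\<exists>j. Sp j \<in> T \<and> j < i) then Max {j. Sp j \<in> T \<and> j < i}
                                 else Max {j. Sp j \<in> T})
               | _ \<Rightarrow> d))"

text \<open>The face (region of the complement) containing dart d; its number of elements is
the number of its sides counted with multiplicity.\<close>
definition face :: "nat \<Rightarrow> arc set \<Rightarrow> dart \<Rightarrow> dart set" where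
  "face n T d = {(nxt n T ^^ k) d | k. True}"

definition faces :: "nat \<Rightarrow> arc set \<Rightarrow> dart set set" where
  "faces n T = face n T ` darts n T"

text \<open>(m+2)-angulation: pairwise non-crossing arcs, every region is a polygon (which forces
the puncture to be an endpoint of some arc, otherwise its region is a punctured polygon)
and every region has exactly m+2 sides counted with multiplicity.\<close>
definition angulation :: "nat \<Rightarrow> nat \<Rightarrow> arc set \<Rightarrow> bool" where
  "angulation m n T \<longleftrightarrow>
     T \<subseteq> {a. is_arc n a}
     \<and> (\<forall>a \<in> T. \<forall>b \<in> T. a \<noteq> b \<longrightarrow> \<not> crosses n a b)
     \<and> (\<exists>i. Sp i \<in> T)
     \<and> (\<forall>F \<in> faces n T. card F = m + 2)"

end

theory Submission
  imports Defs
begin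

text \<open>The darts of the combinatorial map are the \<open>n\<close> boundary segments and both orientations of
  every arc, \<open>n + 2 |T|\<close> in all, and the regions of the complement are the orbits of the
  face-tracing permutation. Call the backward dart of a chord and the upward dart of a spoke the
  closing dart of its arc. Tracing a face from any dart reaches a closing dart, since the distance
  to the far end of the innermost arc above the current dart keeps decreasing; and a label read
  off the universal cover (the innermost chord enclosing a forward dart, or else the next spoke)
  is constant along faces and recovers each arc from its closing dart. So faces correspond to
  arcs, and if every face has \<open>m + 2\<close> sides then \<open>(m + 2) |T| = n + 2 |T|\<close>, i.e. \<open>n = m |T|\<close>.
  Conversely, the spokes at the multiples of \<open>m\<close> leave \<open>n / m\<close> faces, each bounded by \<open>m\<close>
  boundary segments and two spokes.\<close>

section \<open>Arithmetic of boundary positions\<close>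

lemma int_bmod: "0 < n \<Longrightarrow> int (bmod n x) = x mod int n"
  unfolding bmod_def by simp

lemma bmod_less: "0 < n \<Longrightarrow> bmod n x < n"
  unfolding bmod_def by (simp add: nat_less_iff)

lemma bmod_add_diff_cancel: "a < n \<Longrightarrow> bmod n (int (bmod n (int a + e)) - e) = a"
  unfolding bmod_def by (simp add: mod_diff_left_eq)

lemma bmod_nat: "x = int m \<Longrightarrow> m < n \<Longrightarrow> bmod n x = m"
  unfolding bmod_def by simp

lemma bmod_nat_wrap: "x = int m \<Longrightarrow> n \<le> m \<Longrightarrow> m < 2 * n \<Longrightarrow> bmod n x = m - n"
  unfolding bmod_def by (simp flip: of_nat_mod add: le_mod_geq)

lemma mod_diff_eq_offset:
  fixes c x :: int
  assumes "c mod m = j" "x mod m = a" "c \<le> x" "x < c + m"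
  shows "(a - j) mod m = x - c"
proof -
  have "(a - j) mod m = (x - c) mod m" using assms(1,2) by (metis mod_diff_eq)
  then show ?thesis using assms(3,4) by simp
qed

lemma Least_shift:
  fixes P :: "nat \<Rightarrow> bool"
  assumes "\<exists>r. P r" "\<And>r. r < K \<Longrightarrow> \<not> P r"
  shows "(LEAST r. P r) = K + (LEAST r. P (K + r))"
proof (rule Least_equality)
  obtain r where "P r" using assms(1) by blast
  then have "P (K + (r - K))" using assms(2) by (metis add_diff_inverse_nat)
  then show "P (K + (LEAST r. P (K + r)))" by (rule LeastI)
next
  fix r assume "P r"
  then have "P (K + (r - K))" "K \<le> r" using assms(2) by (metis add_diff_inverse_nat not_less)+
  then show "K + (LEAST r. P (K + r)) \<le> r" using Least_le[of "\<lambda>r. P (K + r)" "r - K"] by simp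
qed

section \<open>Orbits of injective self-maps\<close>

lemma funpow_in: "f ` S \<subseteq> S \<Longrightarrow> x \<in> S \<Longrightarrow> (f ^^ k) x \<in> S"
  by (induction k) auto

lemma funpow_period:
  assumes "finite S" "inj_on f S" "f ` S \<subseteq> S" "x \<in> S"
  obtains p where "0 < p" "(f ^^ p) x = x"
proof -
  have "\<not> inj_on (\<lambda>k. (f ^^ k) x) {..card S}"
  proof
    assume "inj_on (\<lambda>k. (f ^^ k) x) {..card S}"
    moreover have "(\<lambda>k. (f ^^ k) x) ` {..card S} \<subseteq> S" using funpow_in[OF assms(3,4)] by auto
    ultimately have "card {..card S} \<le> card S" by (rule card_inj_on_le[OF _ _ assms(1)])
    then show False by simp
  qed
  then obtain i j where ij: "i < j" "(f ^^ i) x = (f ^^ j) x"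
    unfolding inj_on_def by (metis linorder_neqE_nat)
  then obtain m where m: "0 < m" "(f ^^ i) x = (f ^^ (i + m)) x"
    using less_imp_add_positive by metis
  have cancel: "(f ^^ m) x = x" if "(f ^^ i) x = (f ^^ (i + m)) x" for i m
    using that
  proof (induction i)
    case (Suc i)
    have "(f ^^ i) x = (f ^^ (i + m)) x"
      by (rule inj_onD[OF assms(2)]) (use Suc.prems funpow_in[OF assms(3,4)] in simp_all)
    then show ?case by (rule Suc.IH)
  qed simp
  show thesis using that[OF m(1) cancel[OF m(2)]] .
qed

lemma funpow_orbit_eq:
  assumes "finite S" "inj_on f S" "f ` S \<subseteq> S" "x \<in> S" "y = (f ^^ k) x"
  shows "{(f ^^ j) y | j. True} = {(f ^^ j) x | j. True}"
proof -
  have shift: "(f ^^ i) ((f ^^ j) z) = (f ^^ (i + j)) z" for i j z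
    by (simp add: funpow_add)
  obtain p where p: "0 < p" "(f ^^ p) x = x" using funpow_period[OF assms(1-4)] .
  have "(f ^^ (p * k - k)) y = (f ^^ (p * k)) x"
    using assms(5) p(1) by (simp add: shift)
  also have "\<dots> = x" using funpow_mod_eq[OF p(2), of "p * k"] by simp
  finally have y_to_x: "(f ^^ (p * k - k)) y = x" .
  show ?thesis
  proof (intro equalityI subsetI)
    fix z assume "z \<in> {(f ^^ j) y | j. True}"
    then obtain j where "z = (f ^^ j) y" by blast
    then have "z = (f ^^ (j + k)) x" using assms(5) shift by simp
    then show "z \<in> {(f ^^ j) x | j. True}" by blast
  next
    fix z assume "z \<in> {(f ^^ j) x | j. True}"
    then obtain j where "z = (f ^^ j) x" by blast
    then have "z = (f ^^ (j + (p * k - k))) y" using y_to_x shift by metis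
    then show "z \<in> {(f ^^ j) y | j. True}" by blast
  qed
qed

section \<open>Combinatorial maps of arc systems\<close>

lemma dkey_Out_neg_iff [simp]: "dkey (Out a e) < 0 \<longleftrightarrow> 0 < e"
  by (simp add: divide_less_0_iff)

lemma dkey_Out_pos_iff [simp]: "0 < dkey (Out a e) \<longleftrightarrow> e < 0"
  by (simp add: zero_less_divide_iff)

lemma dkey_Out_less_Out_iff [simp]:
  assumes "e \<noteq> 0" "e' \<noteq> 0"
  shows "dkey (Out a e) < dkey (Out b e') \<longleftrightarrow> (0 < e \<and> e' < 0) \<or> (e < e' \<and> (0 < e \<or> e' < 0))"
  using assms by (cases "0 < e"; cases "0 < e'") (auto simp: divide_simps)

declare dkey.simps(1) [simp del] \<comment> \<open>keys are compared through the sign lemmas above\<close>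

locale arc_system =
  fixes n :: nat and T :: "arc set"
  assumes n_pos: "0 < n"
    and arcs: "T \<subseteq> {a. is_arc n a}"
    and noncrossing: "\<And>a b. a \<in> T \<Longrightarrow> b \<in> T \<Longrightarrow> a \<noteq> b \<Longrightarrow> \<not> crosses n a b"
    and has_spoke: "\<exists>i. Sp i \<in> T"
begin

lemma chord_bounds: "Ch i k \<in> T \<Longrightarrow> i < n \<and> 2 \<le> k \<and> k \<le> n"
  using arcs by (auto simp: is_arc_def)

lemma spoke_bound: "Sp i \<in> T \<Longrightarrow> i < n"
  using arcs by (auto simp: is_arc_def)

lemma one_le_segment_or_chord: "k = 1 \<or> Ch v k \<in> T \<Longrightarrow> 1 \<le> k"
  using chord_bounds by force

lemma finite_arcs: "finite T"
proof -
  have "T \<subseteq> (\<lambda>(i, k). Ch i k) ` ({..<n} \<times> {..n}) \<union> Sp ` {..<n}"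
  proof
    fix a assume "a \<in> T"
    then show "a \<in> (\<lambda>(i, k). Ch i k) ` ({..<n} \<times> {..n}) \<union> Sp ` {..<n}"
      using chord_bounds spoke_bound by (cases a) auto
  qed
  then show ?thesis by (rule finite_subset) auto
qed

lemma finite_spokes: "finite {j. Sp j \<in> T}"
  using spoke_bound by (metis finite_nat_set_iff_bounded mem_Collect_eq)

lemma lift_mod: "i < n \<Longrightarrow> c mod int n = int i \<Longrightarrow> c = int i + c div int n * int n"
  by (metis add.commute mod_div_mult_eq mult.commute)

lemma chord_lifts_not_interleaved:
  fixes c d :: int
  assumes "Ch i k \<in> T" "Ch j l \<in> T" "c mod int n = int i" "d mod int n = int j"
  shows "\<not> (c < d \<and> d < c + int k \<and> c + int k < d + int l)"
proof
  assume interleaved: "c < d \<and> d < c + int k \<and> c + int k < d + int l"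
  show False
  proof (cases "Ch i k = Ch j l")
    case True
    then have "(d - c) mod int n = 0" using assms(3,4) by (simp add: mod_diff_eq[symmetric])
    moreover have "0 < d - c" "d - c < int n" using interleaved chord_bounds[OF assms(1)] by auto
    ultimately show False by simp
  next
    case False
    have "c = int i + c div int n * int n" "d = int j + d div int n * int n"
      using assms chord_bounds lift_mod by auto
    then have "crosses n (Ch i k) (Ch j l)"
      using interleaved by (simp add: Let_def) (metis add.commute)
    then show False using noncrossing[OF assms(1,2) False] by blast
  qed
qed

lemma spoke_lift_not_inside_chord_lift:
  fixes c x :: int
  assumes "Ch i k \<in> T" "Sp j \<in> T" "c mod int n = int i" "x mod int n = int j"
  shows "\<not> (c < x \<and> x < c + int k)"
proof
  assume inside: "c < x \<and> x < c + int k"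
  have "c = int i + c div int n * int n" "x = int j + x div int n * int n"
    using assms chord_bounds spoke_bound lift_mod by auto
  then have "crosses n (Ch i k) (Sp j)"
    using inside by (auto simp: algebra_simps intro!: exI[of _ "x div int n - c div int n"])
  then show False using noncrossing[OF assms(1,2)] by blast
qed

lemma Out_in_darts_iff:
  "Out a e \<in> darts n T \<longleftrightarrow> a < n \<and> (e = 1 \<or> (2 \<le> e \<and> Ch a (nat e) \<in> T)
     \<or> (e \<le> -2 \<and> Ch (bmod n (int a + e)) (nat (- e)) \<in> T))"
proof
  assume "Out a e \<in> darts n T"
  then consider "a < n" "e = 1" | k where "Ch a k \<in> T" "e = int k"
    | i k where "Ch i k \<in> T" "a = bmod n (int i + int k)" "e = - int k"
    unfolding darts_def by auto
  then show "a < n \<and> (e = 1 \<or> (2 \<le> e \<and> Ch a (nat e) \<in> T)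
     \<or> (e \<le> -2 \<and> Ch (bmod n (int a + e)) (nat (- e)) \<in> T))"
  proof cases
    case (3 i k)
    then have "bmod n (int a + e) = i"
      using bmod_add_diff_cancel[of i n "int k"] chord_bounds by simp
    then show ?thesis using 3 chord_bounds bmod_less[OF n_pos] by simp
  qed (use chord_bounds in auto)
next
  assume "a < n \<and> (e = 1 \<or> (2 \<le> e \<and> Ch a (nat e) \<in> T)
     \<or> (e \<le> -2 \<and> Ch (bmod n (int a + e)) (nat (- e)) \<in> T))"
  then consider "a < n" "e = 1" | "2 \<le> e" "Ch a (nat e) \<in> T"
    | "a < n" "e \<le> -2" "Ch (bmod n (int a + e)) (nat (- e)) \<in> T" by auto
  then show "Out a e \<in> darts n T"
  proof cases
    case 3
    then have "a = bmod n (int (bmod n (int a + e)) + int (nat (- e)))"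
      using bmod_add_diff_cancel[of a n e] by simp
    then show ?thesis unfolding darts_def using 3 by force
  qed (auto simp: darts_def intro!: exI[of _ "nat e"])
qed

lemma Up_in_darts_iff [simp]: "Up a \<in> darts n T \<longleftrightarrow> Sp a \<in> T"
  unfolding darts_def by auto

lemma Down_in_darts_iff [simp]: "Down a \<in> darts n T \<longleftrightarrow> Sp a \<in> T"
  unfolding darts_def by auto

primrec closing_dart :: "arc \<Rightarrow> dart" where
  "closing_dart (Ch i k) = Out (bmod n (int i + int k)) (- int k)"
| "closing_dart (Sp j) = Up j"

primrec opening_dart :: "arc \<Rightarrow> dart" where
  "opening_dart (Ch i k) = Out i (int k)"
| "opening_dart (Sp j) = Down j"

lemma darts_eq: "darts n T = (\<lambda>i. Out i 1) ` {..<n} \<union> closing_dart ` T \<union> opening_dart ` T"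
proof (intro equalityI subsetI)
  fix x assume "x \<in> darts n T"
  then show "x \<in> (\<lambda>i. Out i 1) ` {..<n} \<union> closing_dart ` T \<union> opening_dart ` T"
    unfolding darts_def
    by (auto intro: rev_image_eqI[of "Ch _ _"] rev_image_eqI[of "Sp _"])
next
  fix x assume x: "x \<in> (\<lambda>i. Out i 1) ` {..<n} \<union> closing_dart ` T \<union> opening_dart ` T"
  have "closing_dart a \<in> darts n T \<and> opening_dart a \<in> darts n T" if "a \<in> T" for a
    using that unfolding darts_def by (cases a) auto
  moreover have "Out i 1 \<in> darts n T" if "i < n" for i
    using that unfolding darts_def by blast
  ultimately show "x \<in> darts n T" using x by blast
qed

lemma closing_dart_in_darts: "a \<in> T \<Longrightarrow> closing_dart a \<in> darts n T"
  unfolding darts_eq by blast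

lemma finite_darts: "finite (darts n T)"
  unfolding darts_eq using finite_arcs by simp

lemma card_darts: "card (darts n T) = n + 2 * card T"
proof -
  have "inj_on closing_dart T"
  proof (rule inj_onI)
    fix a b assume ab: "a \<in> T" "b \<in> T" "closing_dart a = closing_dart b"
    show "a = b"
    proof (cases a; cases b)
      fix i k j l assume chords: "a = Ch i k" "b = Ch j l"
      then have "k = l" "bmod n (int i + int k) = bmod n (int j + int k)" using ab(3) by auto
      moreover have "i < n" "j < n" using ab(1,2) chords chord_bounds by auto
      ultimately show ?thesis
        using chords bmod_add_diff_cancel[of i n "int k"] bmod_add_diff_cancel[of j n "int k"] by metis
    qed (use ab in auto)
  qed
  moreover have "inj_on opening_dart T"
  proof (rule inj_onI)
    fix a b assume "a \<in> T" "b \<in> T" "opening_dart a = opening_dart b"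
    then show "a = b" by (cases a; cases b) auto
  qed
  moreover have "inj_on (\<lambda>i. Out i 1) {..<n}" by (auto intro: inj_onI)
  moreover have "(\<lambda>i. Out i 1) ` {..<n} \<inter> (closing_dart ` T \<union> opening_dart ` T) = {}"
  proof -
    have "Out i 1 \<noteq> closing_dart a" "Out i 1 \<noteq> opening_dart a" if "a \<in> T" for i a
      using that by (cases a; auto dest: chord_bounds)+
    then show ?thesis by blast
  qed
  moreover have "closing_dart ` T \<inter> opening_dart ` T = {}"
  proof -
    have "closing_dart a \<noteq> opening_dart b" if "a \<in> T" "b \<in> T" for a b
      using that by (cases a; cases b) (auto dest: chord_bounds)
    then show ?thesis by blast
  qed
  ultimately show ?thesis
    unfolding darts_eq Un_assoc using finite_arcs
    by (simp add: card_Un_disjoint card_image)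
qed

lemma rot_cases:
  assumes "x \<in> rot n T v"
  obtains (boundary_fwd) "x = Out v 1"
    | (boundary_bwd) "x = Out v (-1)"
    | (chord_fwd) k where "x = Out v (int k)" "Ch v k \<in> T" "2 \<le> k"
    | (chord_bwd) k where "x = Out v (- int k)" "Ch (bmod n (int v - int k)) k \<in> T" "2 \<le> k"
    | (spoke) "x = Up v" "Sp v \<in> T"
proof -
  from assms consider "x = Out v (-1)" | e where "x = Out v e" "Out v e \<in> darts n T"
    | "x = Up v" "Sp v \<in> T"
    unfolding rot_def by (cases x) auto
  then show thesis
  proof cases
    case (2 e)
    then consider "e = 1" | "2 \<le> e" "Ch v (nat e) \<in> T"
      | "e \<le> -2" "Ch (bmod n (int v + e)) (nat (- e)) \<in> T"
      by (auto simp: Out_in_darts_iff)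
    then show thesis
    proof cases
      case 2 then show thesis using chord_fwd[of "nat e"] \<open>x = Out v e\<close> by simp
    next
      case 3 then show thesis using chord_bwd[of "nat (- e)"] \<open>x = Out v e\<close> by simp
    qed (use 2 that in simp)
  qed (use that in auto)
qed

lemma Out_in_rot_iff: "Out v e \<in> rot n T v \<longleftrightarrow> Out v e \<in> darts n T \<or> e = -1"
  unfolding rot_def by auto

lemma Up_in_rot_iff: "Up v \<in> rot n T v \<longleftrightarrow> Sp v \<in> T"
  unfolding rot_def by auto

lemma inj_on_dkey_rot: "inj_on dkey (rot n T v)"
proof -
  have rot_shape: "(\<exists>e. e \<noteq> 0 \<and> x = Out v e) \<or> x = Up v" if "x \<in> rot n T v" for x
    using that by (cases rule: rot_cases) auto
  show ?thesis
  proof (rule inj_onI)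
    fix x y assume "x \<in> rot n T v" "y \<in> rot n T v" "dkey x = dkey y"
    then show "x = y" using rot_shape[of x] rot_shape[of y] by (auto simp: dkey.simps)
  qed
qed

lemma nxt_eqI:
  assumes "dhead n d = V v" "x \<in> rot n T v" "dkey x < dkey (drev n d)"
    and "\<And>y. y \<in> rot n T v \<Longrightarrow> dkey y < dkey (drev n d) \<Longrightarrow> \<not> dkey x < dkey y"
  shows "nxt n T d = x"
  unfolding nxt_def assms(1) vtx.case
proof (rule the_equality)
  fix y assume y: "y \<in> rot n T v \<and> dkey y < dkey (drev n d) \<and>
    (\<forall>z\<in>rot n T v. dkey z < dkey (drev n d) \<longrightarrow> dkey z \<le> dkey y)"
  then have "dkey y = dkey x" using assms(2-4) by force
  then show "y = x" using inj_on_dkey_rot y assms(2) by (auto dest: inj_onD)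
qed (use assms in \<open>auto simp: not_less\<close>)

lemma nxt_forward_to_chord_end:
  assumes e: "1 \<le> e" and v: "v = bmod n (int a + e)"
    and k0: "Ch (bmod n (int v - int k0)) k0 \<in> T" "e < int k0"
    and shortest: "\<And>k. Ch (bmod n (int v - int k)) k \<in> T \<Longrightarrow> e < int k \<Longrightarrow> k0 \<le> k"
  shows "nxt n T (Out a e) = Out v (- int k0)"
proof (rule nxt_eqI)
  have drev: "drev n (Out a e) = Out v (- e)" using v by simp
  have "v < n" using v bmod_less n_pos by simp
  then show "Out v (- int k0) \<in> rot n T v"
    using k0 chord_bounds unfolding Out_in_rot_iff Out_in_darts_iff by auto
  show "dkey (Out v (- int k0)) < dkey (drev n (Out a e))"
    using e k0 by (simp add: drev)
  fix y assume "y \<in> rot n T v" "dkey y < dkey (drev n (Out a e))"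
  then show "\<not> dkey (Out v (- int k0)) < dkey y"
    using e k0 by (cases rule: rot_cases) (auto simp: drev dest: shortest)
qed (use v in simp)

lemma nxt_forward_to_spoke:
  assumes e: "1 \<le> e" and v: "v = bmod n (int a + e)"
    and no_longer: "\<And>k. Ch (bmod n (int v - int k)) k \<in> T \<Longrightarrow> int k \<le> e"
    and "Sp v \<in> T"
  shows "nxt n T (Out a e) = Up v"
proof (rule nxt_eqI)
  have drev: "drev n (Out a e) = Out v (- e)" using v by simp
  show "Up v \<in> rot n T v" using \<open>Sp v \<in> T\<close> by (simp add: Up_in_rot_iff)
  show "dkey (Up v) < dkey (drev n (Out a e))" using e by (simp add: drev)
  fix y assume "y \<in> rot n T v" "dkey y < dkey (drev n (Out a e))"
  then show "\<not> dkey (Up v) < dkey y"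
    using e by (cases rule: rot_cases) (auto simp: drev dest: no_longer)
qed (use v in simp)

lemma nxt_forward_turn:
  assumes e: "1 \<le> e" and v: "v = bmod n (int a + e)"
    and no_longer: "\<And>k. Ch (bmod n (int v - int k)) k \<in> T \<Longrightarrow> int k \<le> e"
    and "Sp v \<notin> T"
    and kk: "kk = 1 \<or> Ch v kk \<in> T" and longest: "\<And>k. Ch v k \<in> T \<Longrightarrow> k \<le> kk"
  shows "nxt n T (Out a e) = Out v (int kk)"
proof (rule nxt_eqI)
  have drev: "drev n (Out a e) = Out v (- e)" using v by simp
  have "v < n" using v bmod_less n_pos by simp
  then show "Out v (int kk) \<in> rot n T v"
    using kk chord_bounds unfolding Out_in_rot_iff Out_in_darts_iff by auto
  have "1 \<le> kk" using kk by (rule one_le_segment_or_chord)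
  then show "dkey (Out v (int kk)) < dkey (drev n (Out a e))" using e by (simp add: drev)
  fix y assume "y \<in> rot n T v" "dkey y < dkey (drev n (Out a e))"
  then show "\<not> dkey (Out v (int kk)) < dkey y"
    using e \<open>1 \<le> kk\<close> \<open>Sp v \<notin> T\<close>
    by (cases rule: rot_cases) (auto simp: drev dest: no_longer longest)
qed (use v in simp)

lemma nxt_closing_chord:
  assumes pk: "Ch p k \<in> T"
    and kk: "kk = 1 \<or> Ch p kk \<in> T" "kk < k"
    and longest: "\<And>j. Ch p j \<in> T \<Longrightarrow> j < k \<Longrightarrow> j \<le> kk"
  shows "nxt n T (closing_dart (Ch p k)) = Out p (int kk)"
proof (rule nxt_eqI)
  have "p < n" using pk chord_bounds by auto
  then have p: "bmod n (int (bmod n (int p + int k)) - int k) = p"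
    by (rule bmod_add_diff_cancel)
  then show "dhead n (closing_dart (Ch p k)) = V p" by simp
  have drev: "drev n (closing_dart (Ch p k)) = Out p (int k)" using p by simp
  show "Out p (int kk) \<in> rot n T p"
    using kk \<open>p < n\<close> chord_bounds unfolding Out_in_rot_iff Out_in_darts_iff by auto
  have "1 \<le> kk" using kk(1) by (rule one_le_segment_or_chord)
  then show "dkey (Out p (int kk)) < dkey (drev n (closing_dart (Ch p k)))"
    using kk by (simp add: drev)
  fix y assume "y \<in> rot n T p" "dkey y < dkey (drev n (closing_dart (Ch p k)))"
  then show "\<not> dkey (Out p (int kk)) < dkey y"
    using \<open>1 \<le> kk\<close> chord_bounds[OF pk]
    by (cases rule: rot_cases) (auto simp: p dest: longest)
qed

lemma nxt_Down:
  assumes "Sp j \<in> T"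
    and kk: "kk = 1 \<or> Ch j kk \<in> T" and longest: "\<And>k. Ch j k \<in> T \<Longrightarrow> k \<le> kk"
  shows "nxt n T (Down j) = Out j (int kk)"
proof (rule nxt_eqI)
  show "Out j (int kk) \<in> rot n T j"
    using kk spoke_bound[OF \<open>Sp j \<in> T\<close>] chord_bounds
    unfolding Out_in_rot_iff Out_in_darts_iff by auto
  have "1 \<le> kk" using kk by (rule one_le_segment_or_chord)
  then show "dkey (Out j (int kk)) < dkey (drev n (Down j))" by simp
  fix y assume "y \<in> rot n T j" "dkey y < dkey (drev n (Down j))"
  then show "\<not> dkey (Out j (int kk)) < dkey y"
    using \<open>1 \<le> kk\<close> by (cases rule: rot_cases) (auto dest: longest)
qed simp

lemma nxt_Up:
  "nxt n T (Up i) = Down (if \<exists>j. Sp j \<in> T \<and> j < i then Max {j. Sp j \<in> T \<and> j < i}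
                          else Max {j. Sp j \<in> T})"
  by (simp add: nxt_def)

section \<open>Face labels\<close>

definition spoke_gap :: "int \<Rightarrow> nat" where
  "spoke_gap x = (LEAST r. Sp (bmod n (x + int r)) \<in> T)"

definition next_spoke :: "int \<Rightarrow> nat" where
  "next_spoke x = bmod n (x + int (spoke_gap x))"

lemma spoke_ahead: "\<exists>r. Sp (bmod n (x + int r)) \<in> T"
proof -
  obtain j where j: "Sp j \<in> T" using has_spoke by blast
  have "bmod n (x + int (nat ((int j - x) mod int n))) = j"
    using spoke_bound[OF j] n_pos unfolding bmod_def by (simp add: mod_add_right_eq)
  then show ?thesis using j by metis
qed

lemma next_spoke_eq: "Sp (bmod n x) \<in> T \<Longrightarrow> next_spoke x = bmod n x"
  unfolding next_spoke_def spoke_gap_def by (subst Least_eq_0) simp_all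

lemma spoke_gap_skip:
  assumes "\<And>r. r < K \<Longrightarrow> Sp (bmod n (x + int r)) \<notin> T"
  shows "spoke_gap x = K + spoke_gap (x + int K)"
proof -
  have "(LEAST r. Sp (bmod n (x + int r)) \<in> T) = K + (LEAST r. Sp (bmod n (x + int (K + r))) \<in> T)"
    by (rule Least_shift[OF spoke_ahead]) (use assms in simp)
  then show ?thesis unfolding spoke_gap_def by (simp add: add.assoc)
qed

lemma next_spoke_skip:
  "(\<And>r. r < K \<Longrightarrow> Sp (bmod n (x + int r)) \<notin> T) \<Longrightarrow> next_spoke x = next_spoke (x + int K)"
  unfolding next_spoke_def using spoke_gap_skip[of K x] by (simp add: add.assoc)

lemma bmod_add_cong: "x mod int n = y mod int n \<Longrightarrow> bmod n (x + z) = bmod n (y + z)"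
  unfolding bmod_def by (metis mod_add_left_eq)

lemma spoke_gap_cong:
  assumes "x mod int n = y mod int n"
  shows "spoke_gap x = spoke_gap y"
proof -
  have "bmod n (x + z) = bmod n (y + z)" for z using assms by (rule bmod_add_cong)
  then show ?thesis unfolding spoke_gap_def by simp
qed

lemma next_spoke_cong:
  assumes "x mod int n = y mod int n"
  shows "next_spoke x = next_spoke y"
proof -
  have "bmod n (x + z) = bmod n (y + z)" for z using assms by (rule bmod_add_cong)
  then show ?thesis unfolding next_spoke_def using spoke_gap_cong[OF assms] by simp
qed

text \<open>The chords of \<open>T\<close> whose lift, taken with left end in \<open>(a - n, a]\<close>, covers the lift
  \<open>[a, a + e]\<close> of a forward dart \<open>Out a e\<close> (the chord carrying the dart itself excluded).\<close>

definition enclosing :: "nat \<Rightarrow> int \<Rightarrow> (nat \<times> nat) set" where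
  "enclosing a e =
     {(i, k). Ch i k \<in> T \<and> (int a - int i) mod int n + e \<le> int k \<and> \<not> (i = a \<and> int k = e)}"

definition innermost :: "(nat \<times> nat) set \<Rightarrow> nat \<times> nat" where
  "innermost S = (SOME p. p \<in> S \<and> (\<forall>q\<in>S. snd p \<le> snd q))"

text \<open>The arc whose closing dart lies on the face of the given dart.\<close>

primrec face_arc :: "dart \<Rightarrow> arc" where
  "face_arc (Out a e) =
     (if 1 \<le> e then
        if enclosing a e \<noteq> {} then case_prod Ch (innermost (enclosing a e))
        else Sp (next_spoke (int a + e))
      else Ch (bmod n (int a + e)) (nat (- e)))"
| "face_arc (Up j) = Sp j"
| "face_arc (Down j) = Sp (next_spoke (int j + 1))"

lemma mem_enclosing_iff:
  "(i, k) \<in> enclosing a e \<longleftrightarrow>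
     Ch i k \<in> T \<and> (int a - int i) mod int n + e \<le> int k \<and> \<not> (i = a \<and> int k = e)"
  unfolding enclosing_def by simp

lemma finite_enclosing: "finite (enclosing a e)"
proof -
  have "enclosing a e \<subseteq> {..<n} \<times> {..n}" unfolding enclosing_def using chord_bounds by auto
  then show ?thesis by (rule finite_subset) simp
qed

lemma mod_diff_mod_self: "i < n \<Longrightarrow> (x - (x - int i) mod int n) mod int n = int i"
  by (simp add: mod_diff_right_eq)

lemma enclosing_length_unique:
  assumes "1 \<le> e" "(i, k) \<in> enclosing a e" "(j, k) \<in> enclosing a e"
  shows "i = j"
proof (rule ccontr)
  assume "i \<noteq> j"
  define r where "r = (int a - int i) mod int n"
  define s where "s = (int a - int j) mod int n"
  have ci: "Ch i k \<in> T" "r + e \<le> int k" and cj: "Ch j k \<in> T" "s + e \<le> int k"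
    using assms(2,3) unfolding mem_enclosing_iff r_def s_def by auto
  have lifts: "(int a - r) mod int n = int i" "(int a - s) mod int n = int j"
    unfolding r_def s_def using chord_bounds[OF ci(1)] chord_bounds[OF cj(1)]
    by (simp_all add: mod_diff_mod_self)
  have "0 \<le> r" "0 \<le> s" unfolding r_def s_def using n_pos by simp_all
  moreover have "r \<noteq> s" using lifts \<open>i \<noteq> j\<close> by auto
  then consider "r < s" | "s < r" by linarith
  then show False
  proof cases
    case 1
    then show False
      using chord_lifts_not_interleaved[OF cj(1) ci(1) lifts(2,1)] \<open>i \<noteq> j\<close> \<open>0 \<le> r\<close> cj(2) assms(1)
      by auto
  next
    case 2
    then show False
      using chord_lifts_not_interleaved[OF ci(1) cj(1) lifts] \<open>i \<noteq> j\<close> \<open>0 \<le> s\<close> ci(2) assms(1)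
      by auto
  qed
qed

lemma innermost_spec:
  assumes "S \<noteq> {}" "finite S"
  shows "innermost S \<in> S \<and> (\<forall>q\<in>S. snd (innermost S) \<le> snd q)"
proof -
  have "Min (snd ` S) \<in> snd ` S" using assms by simp
  then obtain p where p: "p \<in> S" "snd p = Min (snd ` S)" by auto
  have "\<forall>q\<in>S. snd p \<le> snd q" using p(2) assms(2) by simp
  then have "\<exists>p. p \<in> S \<and> (\<forall>q\<in>S. snd p \<le> snd q)" using p(1) by blast
  then show ?thesis unfolding innermost_def by (rule someI_ex)
qed

lemma innermost_enclosing_eq:
  assumes "1 \<le> e" "p \<in> enclosing a e" "\<And>q. q \<in> enclosing a e \<Longrightarrow> snd p \<le> snd q"
  shows "innermost (enclosing a e) = p"
proof -
  let ?q = "innermost (enclosing a e)"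
  have q: "?q \<in> enclosing a e" "snd ?q \<le> snd p"
    using innermost_spec[OF _ finite_enclosing] assms(2) by blast+
  then have "snd ?q = snd p" using assms(3) by (simp add: antisym)
  then show ?thesis using enclosing_length_unique[OF assms(1)] q(1) assms(2) by (metis prod.collapse)
qed

lemma mem_enclosing_iff_lift:
  assumes x: "x mod int n = int a" and e: "1 \<le> e"
  shows "(j, l) \<in> enclosing a e \<longleftrightarrow> Ch j l \<in> T \<and>
    (\<exists>c. c mod int n = int j \<and> c \<le> x \<and> x + e \<le> c + int l \<and> (c = x \<longrightarrow> int l \<noteq> e))"
proof
  assume "(j, l) \<in> enclosing a e"
  then have jl: "Ch j l \<in> T" "(int a - int j) mod int n + e \<le> int l" "\<not> (j = a \<and> int l = e)"
    by (auto simp: mem_enclosing_iff)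
  define c where "c = x - (int a - int j) mod int n"
  have "j < n" using jl(1) chord_bounds by auto
  have "a < n" using x n_pos pos_mod_bound[of "int n" x] by simp
  have "c mod int n = (x mod int n - (int a - int j)) mod int n"
    unfolding c_def by (simp add: mod_diff_right_eq mod_diff_left_eq)
  then have "c mod int n = int j" using x \<open>j < n\<close> by simp
  moreover have "int l \<noteq> e" if "c = x"
  proof -
    have "int a mod int n = int j mod int n"
      using that unfolding c_def by (simp add: mod_eq_dvd_iff dvd_eq_mod_eq_0)
    then have "j = a" using \<open>a < n\<close> \<open>j < n\<close> by simp
    then show ?thesis using jl(3) by simp
  qed
  ultimately show "Ch j l \<in> T \<and>
    (\<exists>c. c mod int n = int j \<and> c \<le> x \<and> x + e \<le> c + int l \<and> (c = x \<longrightarrow> int l \<noteq> e))"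
    using jl n_pos unfolding c_def by auto
next
  assume "Ch j l \<in> T \<and>
    (\<exists>c. c mod int n = int j \<and> c \<le> x \<and> x + e \<le> c + int l \<and> (c = x \<longrightarrow> int l \<noteq> e))"
  then obtain c where jl: "Ch j l \<in> T" and c: "c mod int n = int j" "c \<le> x" "x + e \<le> c + int l"
    "c = x \<longrightarrow> int l \<noteq> e" by blast
  have "(int a - int j) mod int n = x - c"
    using mod_diff_eq_offset[OF c(1) x c(2)] c(3) e chord_bounds[OF jl] by linarith
  moreover have "j = a \<Longrightarrow> c = x" using calculation by simp
  ultimately show "(j, l) \<in> enclosing a e"
    using jl c unfolding mem_enclosing_iff by auto
qed

lemma enclosingI:
  assumes "x mod int n = int a" "1 \<le> e" "Ch j l \<in> T" "c mod int n = int j" "c \<le> x"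
    "x + e \<le> c + int l" "c = x \<Longrightarrow> int l \<noteq> e"
  shows "(j, l) \<in> enclosing a e"
  using assms mem_enclosing_iff_lift by blast

lemma enclosing_liftE:
  assumes "(j, l) \<in> enclosing a e" "x mod int n = int a" "1 \<le> e"
  obtains c where "Ch j l \<in> T" "c mod int n = int j" "c \<le> x" "x + e \<le> c + int l"
    "c = x \<Longrightarrow> int l \<noteq> e"
  using assms mem_enclosing_iff_lift by blast

lemma bmod_lift_start:
  assumes "v = bmod n (int a + e)" "c mod int n = int j" "c + int l = int a + e"
  shows "bmod n (int v - int l) = j"
proof -
  have "int (bmod n (int v - int l)) = ((int a + e) mod int n - int l) mod int n"
    using assms(1) n_pos by (simp add: int_bmod)
  also have "\<dots> = c mod int n" using assms(3) by (simp add: mod_diff_left_eq flip: assms(3))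
  finally show ?thesis using assms(2) by simp
qed

lemma enclosing_beyond_head:
  assumes a: "a < n" and e: "1 \<le> e" and v: "v = bmod n (int a + e)"
    and no_longer: "\<And>k. Ch (bmod n (int v - int k)) k \<in> T \<Longrightarrow> int k \<le> e"
    and "(j, l) \<in> enclosing a e"
  obtains c where "Ch j l \<in> T" "c mod int n = int j" "c \<le> int a" "int a + e < c + int l"
proof -
  obtain c where c: "Ch j l \<in> T" "c mod int n = int j" "c \<le> int a" "int a + e \<le> c + int l"
    "c = int a \<Longrightarrow> int l \<noteq> e"
    using enclosing_liftE[OF assms(5) _ e, of "int a"] a by auto
  have "c + int l \<noteq> int a + e"
  proof
    assume at_head: "c + int l = int a + e"
    then have "e < int l" using c(3,5) by (cases "c = int a") auto
    then show False using no_longer[of l] bmod_lift_start[OF v c(2) at_head] c(1) by simp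
  qed
  then show thesis using that c by simp
qed

lemma face_arc_forward_to_chord_end:
  assumes a: "a < n" and e: "1 \<le> e" and v: "v = bmod n (int a + e)"
    and k0: "Ch (bmod n (int v - int k0)) k0 \<in> T" "e < int k0"
    and shortest: "\<And>k. Ch (bmod n (int v - int k)) k \<in> T \<Longrightarrow> e < int k \<Longrightarrow> k0 \<le> k"
  shows "face_arc (Out a e) = Ch (bmod n (int v - int k0)) k0"
proof -
  define i0 where "i0 = bmod n (int v - int k0)"
  have a_mod: "int a mod int n = int a" using a by simp
  have lift0: "(int a + e - int k0) mod int n = int i0"
    unfolding i0_def v using n_pos by (simp add: int_bmod mod_diff_left_eq)
  have p0: "(i0, k0) \<in> enclosing a e"
    by (rule enclosingI[OF a_mod e k0(1)[folded i0_def] lift0]) (use k0(2) in auto)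
  have "k0 \<le> l" if jl: "(j, l) \<in> enclosing a e" for j l
  proof (rule ccontr)
    assume "\<not> k0 \<le> l"
    obtain c where c: "Ch j l \<in> T" "c mod int n = int j" "c \<le> int a" "int a + e \<le> c + int l"
      "c = int a \<Longrightarrow> int l \<noteq> e"
      using enclosing_liftE[OF jl a_mod e] by blast
    show False
    proof (cases "c + int l = int a + e")
      case True
      then have "e < int l" using c(3,5) by (cases "c = int a") auto
      then show False
        using shortest[of l] bmod_lift_start[OF v c(2) True] c(1) \<open>\<not> k0 \<le> l\<close> by auto
    next
      case False
      then show False
        using chord_lifts_not_interleaved[OF k0(1)[folded i0_def] c(1) lift0 c(2)] c(3,4) e
          \<open>\<not> k0 \<le> l\<close> by auto
    qed
  qed
  then have "innermost (enclosing a e) = (i0, k0)"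
    by (intro innermost_enclosing_eq[OF e p0]) auto
  then show ?thesis using e p0 unfolding i0_def by auto
qed

lemma face_arc_forward_to_spoke:
  assumes a: "a < n" and e: "1 \<le> e" and v: "v = bmod n (int a + e)"
    and no_longer: "\<And>k. Ch (bmod n (int v - int k)) k \<in> T \<Longrightarrow> int k \<le> e"
    and "Sp v \<in> T"
  shows "face_arc (Out a e) = Sp v"
proof -
  have v_mod: "(int a + e) mod int n = int v" using v n_pos by (simp add: int_bmod)
  have "enclosing a e = {}"
  proof (rule equals0I)
    fix p assume "p \<in> enclosing a e"
    moreover obtain j l where "p = (j, l)" by fastforce
    ultimately obtain c where "Ch j l \<in> T" "c mod int n = int j" "c \<le> int a" "int a + e < c + int l"
      using enclosing_beyond_head[OF a e v no_longer] by blast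
    then show False
      using spoke_lift_not_inside_chord_lift[OF _ \<open>Sp v \<in> T\<close> _ v_mod] e by auto
  qed
  moreover have "next_spoke (int a + e) = v" using next_spoke_eq \<open>Sp v \<in> T\<close> v by simp
  ultimately show ?thesis using e by simp
qed

lemma no_spoke_below_chord:
  assumes "kk = 1 \<or> Ch v kk \<in> T" "v < n" "Sp v \<notin> T" "r < kk"
  shows "Sp (bmod n (int v + int r)) \<notin> T"
proof
  assume spoke: "Sp (bmod n (int v + int r)) \<in> T"
  show False
  proof (cases "r = 0")
    case True then show False using spoke assms(2,3) unfolding bmod_def by simp
  next
    case False
    then have "Ch v kk \<in> T" using assms(1,4) by auto
    then show False
      using spoke_lift_not_inside_chord_lift[OF _ spoke, of v kk "int v" "int v + int r"]
        assms(2,4) False n_pos by (simp add: int_bmod)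
  qed
qed

lemma enclosing_subset_after_turn:
  assumes a: "a < n" and e: "1 \<le> e" and v: "v = bmod n (int a + e)"
    and no_longer: "\<And>k. Ch (bmod n (int v - int k)) k \<in> T \<Longrightarrow> int k \<le> e"
    and kk: "kk = 1 \<or> Ch v kk \<in> T"
  shows "enclosing a e \<subseteq> enclosing v (int kk)"
proof (clarify)
  fix j l assume "(j, l) \<in> enclosing a e"
  then obtain c where c: "Ch j l \<in> T" "c mod int n = int j" "c \<le> int a" "int a + e < c + int l"
    using enclosing_beyond_head[OF a e v no_longer] by blast
  have v_mod: "(int a + e) mod int n = int v" using v n_pos by (simp add: int_bmod)
  have "int a + e + int kk \<le> c + int l"
  proof (rule ccontr)
    assume short: "\<not> int a + e + int kk \<le> c + int l"
    then have chord: "Ch v kk \<in> T" using kk c(4) by auto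
    show False
      using chord_lifts_not_interleaved[OF c(1) chord c(2) v_mod] c(3,4) short e by auto
  qed
  moreover have "1 \<le> kk" using kk by (rule one_le_segment_or_chord)
  ultimately show "(j, l) \<in> enclosing v (int kk)"
    using c e by (intro enclosingI[OF v_mod _ c(1,2)]) auto
qed

lemma enclosing_after_turn_subset:
  assumes d: "Out a e \<in> darts n T" and e: "1 \<le> e" and v: "v = bmod n (int a + e)"
    and "1 \<le> kk" and longest: "\<And>k. Ch v k \<in> T \<Longrightarrow> k \<le> kk"
  shows "enclosing v (int kk) \<subseteq> enclosing a e"
proof (clarify)
  fix j l assume "(j, l) \<in> enclosing v (int kk)"
  moreover have v_mod: "(int a + e) mod int n = int v" using v n_pos by (simp add: int_bmod)
  ultimately obtain c where c: "Ch j l \<in> T" "c mod int n = int j" "c \<le> int a + e"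
    "int a + e + int kk \<le> c + int l" "c = int a + e \<Longrightarrow> int l \<noteq> int kk"
    using enclosing_liftE[of j l v "int kk" "int a + e"] \<open>1 \<le> kk\<close> by auto
  have "c \<noteq> int a + e"
    using c v_mod longest[of l] by force
  have "c \<le> int a"
  proof (rule ccontr)
    assume "\<not> c \<le> int a"
    then have "e \<noteq> 1" using \<open>c \<noteq> int a + e\<close> c(3) by auto
    then have "Ch a (nat e) \<in> T" "a < n" using d e by (auto simp: Out_in_darts_iff)
    then show False
      using chord_lifts_not_interleaved[of a "nat e" j l "int a" c] c \<open>\<not> c \<le> int a\<close>
        \<open>c \<noteq> int a + e\<close> e \<open>1 \<le> kk\<close> by auto
  qed
  moreover have "int a mod int n = int a" using d by (simp add: Out_in_darts_iff)
  ultimately show "(j, l) \<in> enclosing a e"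
    using c e \<open>1 \<le> kk\<close> by (intro enclosingI[of "int a" a e j l c]) auto
qed

lemma enclosing_after_turn:
  assumes d: "Out a e \<in> darts n T" and e: "1 \<le> e" and v: "v = bmod n (int a + e)"
    and no_longer: "\<And>k. Ch (bmod n (int v - int k)) k \<in> T \<Longrightarrow> int k \<le> e"
    and kk: "kk = 1 \<or> Ch v kk \<in> T" and longest: "\<And>k. Ch v k \<in> T \<Longrightarrow> k \<le> kk"
  shows "enclosing v (int kk) = enclosing a e"
proof -
  have "a < n" using d by (simp add: Out_in_darts_iff)
  have "1 \<le> kk" using kk by (rule one_le_segment_or_chord)
  show ?thesis
    using enclosing_subset_after_turn[OF \<open>a < n\<close> e v no_longer kk]
      enclosing_after_turn_subset[OF d e v \<open>1 \<le> kk\<close> longest] by blast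
qed

lemma face_arc_forward_turn:
  assumes d: "Out a e \<in> darts n T" and e: "1 \<le> e" and v: "v = bmod n (int a + e)"
    and no_longer: "\<And>k. Ch (bmod n (int v - int k)) k \<in> T \<Longrightarrow> int k \<le> e"
    and "Sp v \<notin> T"
    and kk: "kk = 1 \<or> Ch v kk \<in> T" and longest: "\<And>k. Ch v k \<in> T \<Longrightarrow> k \<le> kk"
  shows "face_arc (Out v (int kk)) = face_arc (Out a e)"
proof -
  have "v < n" using v bmod_less n_pos by simp
  have "1 \<le> kk" using kk by (rule one_le_segment_or_chord)
  have "next_spoke (int a + e) = next_spoke (int v)"
    using v n_pos by (intro next_spoke_cong) (simp add: int_bmod)
  also have "\<dots> = next_spoke (int v + int kk)"
    using no_spoke_below_chord[OF kk \<open>v < n\<close> \<open>Sp v \<notin> T\<close>] by (rule next_spoke_skip)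
  finally show ?thesis
    using enclosing_after_turn[OF d e v no_longer kk longest] e \<open>1 \<le> kk\<close> by simp
qed

lemma face_arc_after_closing_chord:
  assumes pk: "Ch p k \<in> T"
    and kk: "kk = 1 \<or> Ch p kk \<in> T" "kk < k"
    and longest: "\<And>j. Ch p j \<in> T \<Longrightarrow> j < k \<Longrightarrow> j \<le> kk"
  shows "face_arc (Out p (int kk)) = Ch p k"
proof -
  have p_mod: "int p mod int n = int p" using pk chord_bounds by simp
  have "1 \<le> kk" using kk(1) by (rule one_le_segment_or_chord)
  then have "(p, k) \<in> enclosing p (int kk)"
    using kk pk by (intro enclosingI[OF p_mod _ pk p_mod]) auto
  moreover have "k \<le> l" if jl: "(j, l) \<in> enclosing p (int kk)" for j l
  proof (rule ccontr)
    assume "\<not> k \<le> l"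
    obtain c where c: "Ch j l \<in> T" "c mod int n = int j" "c \<le> int p" "int p + int kk \<le> c + int l"
      "c = int p \<Longrightarrow> int l \<noteq> int kk"
      using enclosing_liftE[OF jl p_mod] \<open>1 \<le> kk\<close> by auto
    show False
    proof (cases "c = int p")
      case True
      then show False using c p_mod longest[of l] \<open>\<not> k \<le> l\<close> by force
    next
      case False
      then show False
        using chord_lifts_not_interleaved[OF c(1) pk c(2) p_mod] c(3,4) \<open>\<not> k \<le> l\<close> \<open>1 \<le> kk\<close>
        by auto
    qed
  qed
  ultimately have "innermost (enclosing p (int kk)) = (p, k)"
    using \<open>1 \<le> kk\<close> by (intro innermost_enclosing_eq) auto
  then show ?thesis using \<open>1 \<le> kk\<close> \<open>(p, k) \<in> enclosing p (int kk)\<close> by auto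
qed

lemma face_arc_after_Down:
  assumes sj: "Sp j \<in> T"
    and kk: "kk = 1 \<or> Ch j kk \<in> T" and longest: "\<And>k. Ch j k \<in> T \<Longrightarrow> k \<le> kk"
  shows "face_arc (Out j (int kk)) = face_arc (Down j)"
proof -
  have j_mod: "int j mod int n = int j" using spoke_bound[OF sj] by simp
  have "1 \<le> kk" using kk by (rule one_le_segment_or_chord)
  have "enclosing j (int kk) = {}"
  proof (rule equals0I, clarify)
    fix i l assume il: "(i, l) \<in> enclosing j (int kk)"
    obtain c where c: "Ch i l \<in> T" "c mod int n = int i" "c \<le> int j" "int j + int kk \<le> c + int l"
      "c = int j \<Longrightarrow> int l \<noteq> int kk"
      using enclosing_liftE[OF il j_mod] \<open>1 \<le> kk\<close> by auto
    show False
    proof (cases "c = int j")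
      case True
      then show False using c j_mod longest[of l] by force
    next
      case False
      then show False
        using spoke_lift_not_inside_chord_lift[OF c(1) sj c(2) j_mod] c(3,4) \<open>1 \<le> kk\<close> by auto
    qed
  qed
  moreover have "next_spoke (int j + 1) = next_spoke (int j + 1 + int (kk - 1))"
  proof (rule next_spoke_skip)
    fix r assume "r < kk - 1"
    then have chord: "Ch j kk \<in> T" using kk by auto
    show "Sp (bmod n (int j + 1 + int r)) \<notin> T"
    proof
      assume spoke: "Sp (bmod n (int j + 1 + int r)) \<in> T"
      have lift: "(int j + 1 + int r) mod int n = int (bmod n (int j + 1 + int r))"
        using n_pos by (simp add: int_bmod)
      show False
        using spoke_lift_not_inside_chord_lift[OF chord spoke j_mod lift] \<open>r < kk - 1\<close> by auto
    qed
  qed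
  ultimately show ?thesis using \<open>1 \<le> kk\<close> by (simp add: of_nat_diff)
qed

lemma next_spoke_eqI:
  assumes "Sp (bmod n (x + int d)) \<in> T" "\<And>r. r < d \<Longrightarrow> Sp (bmod n (x + int r)) \<notin> T"
  shows "next_spoke x = bmod n (x + int d)"
  using next_spoke_skip[OF assms(2)] next_spoke_eq[OF assms(1)] by simp

lemma face_arc_after_Up:
  assumes si: "Sp i \<in> T"
  shows "face_arc (nxt n T (Up i)) = Sp i"
proof (cases "\<exists>j. Sp j \<in> T \<and> j < i")
  case True
  define J where "J = Max {j. Sp j \<in> T \<and> j < i}"
  have fin: "finite {j. Sp j \<in> T \<and> j < i}" by simp
  have J: "Sp J \<in> T" "J < i" using Max_in[OF fin] True unfolding J_def by auto
  have "next_spoke (int J + 1) = bmod n (int J + 1 + int (i - J - 1))"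
  proof (rule next_spoke_eqI)
    fix r assume "r < i - J - 1"
    moreover have "J + 1 + r \<le> J" if "Sp (J + 1 + r) \<in> T" "J + 1 + r < i"
      using that Max_ge[OF fin] unfolding J_def by simp
    moreover have "bmod n (int J + 1 + int r) = J + 1 + r"
      by (rule bmod_nat) (use calculation(1) spoke_bound[OF si] in auto)
    ultimately show "Sp (bmod n (int J + 1 + int r)) \<notin> T" by (auto simp: less_diff_conv)
  qed (use si J spoke_bound[OF si] bmod_nat[of _ i n] in simp)
  then show ?thesis
    unfolding nxt_Up if_P[OF True] J_def[symmetric] using J spoke_bound[OF si] bmod_nat[of _ i n]
    by simp
next
  case False
  define J where "J = Max {j. Sp j \<in> T}"
  have J: "Sp J \<in> T" "i \<le> J" "J < n"
    using Max_in[OF finite_spokes] Max_ge[OF finite_spokes] si spoke_bound unfolding J_def by auto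
  have "next_spoke (int J + 1) = bmod n (int J + 1 + int (n + i - J - 1))"
  proof (rule next_spoke_eqI)
    fix r assume "r < n + i - J - 1"
    moreover have "J + 1 + r \<le> J" if "Sp (J + 1 + r) \<in> T"
      using that Max_ge[OF finite_spokes] unfolding J_def by simp
    moreover have "bmod n (int J + 1 + int r) =
        (if J + 1 + r < n then J + 1 + r else J + 1 + r - n)"
      using bmod_nat[of "int J + 1 + int r" "J + 1 + r" n]
        bmod_nat_wrap[of "int J + 1 + int r" "J + 1 + r" n] calculation(1) J(2,3)
      by auto
    ultimately show "Sp (bmod n (int J + 1 + int r)) \<notin> T" using False by (auto split: if_splits)
  qed (use J bmod_nat_wrap[of _ "n + i" n] spoke_bound[OF si] si in simp)
  then show ?thesis
    unfolding nxt_Up if_not_P[OF False] J_def[symmetric]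
    using J spoke_bound[OF si] bmod_nat_wrap[of _ "n + i" n] by simp
qed

section \<open>Faces correspond to arcs\<close>

lemma longest_chord_below:
  assumes "2 \<le> B"
  obtains kk where "kk = 1 \<or> Ch v kk \<in> T" "kk < B" "\<And>k. Ch v k \<in> T \<Longrightarrow> k < B \<Longrightarrow> k \<le> kk"
proof -
  define K where "K = {k. k < B \<and> (k = 1 \<or> Ch v k \<in> T)}"
  have "finite K" "1 \<in> K" unfolding K_def using assms by auto
  then have "Max K \<in> K" "\<And>k. k \<in> K \<Longrightarrow> k \<le> Max K" by (auto intro: Max_in)
  then show thesis using that unfolding K_def by blast
qed

lemma longest_chord:
  obtains kk where "kk = 1 \<or> Ch v kk \<in> T" "\<And>k. Ch v k \<in> T \<Longrightarrow> k \<le> kk"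
proof -
  obtain kk where "kk = 1 \<or> Ch v kk \<in> T" "\<And>k. Ch v k \<in> T \<Longrightarrow> k < n + 1 \<Longrightarrow> k \<le> kk"
    using longest_chord_below[of "n + 1" v] n_pos by auto
  then show thesis using that chord_bounds by force
qed

text \<open>After a forward dart \<open>Out a e\<close> the face either closes along the shortest chord longer
  than \<open>e\<close> ending at the head \<open>v\<close>, or closes along the spoke at \<open>v\<close>, or turns onto the
  longest chord starting at \<open>v\<close> (or the boundary segment after \<open>v\<close>).\<close>

lemma forward_dart_cases:
  assumes "v = bmod n (int a + e)"
  obtains (chord_end) k0 where "Ch (bmod n (int v - int k0)) k0 \<in> T" "e < int k0"
      "\<And>k. Ch (bmod n (int v - int k)) k \<in> T \<Longrightarrow> e < int k \<Longrightarrow> k0 \<le> k"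
  | (spoke) "\<And>k. Ch (bmod n (int v - int k)) k \<in> T \<Longrightarrow> int k \<le> e" "Sp v \<in> T"
  | (turn) kk where "\<And>k. Ch (bmod n (int v - int k)) k \<in> T \<Longrightarrow> int k \<le> e" "Sp v \<notin> T"
      "kk = 1 \<or> Ch v kk \<in> T" "\<And>k. Ch v k \<in> T \<Longrightarrow> k \<le> kk"
proof (cases "\<exists>k. Ch (bmod n (int v - int k)) k \<in> T \<and> e < int k")
  case True
  define k0 where "k0 = (LEAST k. Ch (bmod n (int v - int k)) k \<in> T \<and> e < int k)"
  show thesis
  proof (rule chord_end)
    show "Ch (bmod n (int v - int k0)) k0 \<in> T" "e < int k0"
      unfolding k0_def using LeastI_ex[OF True] by simp_all
  qed (auto simp: k0_def intro: Least_le)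
next
  case False
  then have no_longer: "\<And>k. Ch (bmod n (int v - int k)) k \<in> T \<Longrightarrow> int k \<le> e" by auto
  show thesis
  proof (cases "Sp v \<in> T")
    case True then show thesis using spoke no_longer by blast
  next
    case False then show thesis using turn no_longer longest_chord by metis
  qed
qed

text \<open>For a forward dart, the distance from its head to the far end of the closing arc of
  its face; it decreases whenever the face turns.\<close>

definition face_measure :: "nat \<Rightarrow> int \<Rightarrow> nat" where
  "face_measure a e =
     (if enclosing a e \<noteq> {}
      then case innermost (enclosing a e) of (i, k) \<Rightarrow> nat (int k - (int a - int i) mod int n - e)
      else spoke_gap (int a + e))"

lemma face_measure_turn_less:
  assumes d: "Out a e \<in> darts n T" and e: "1 \<le> e" and v: "v = bmod n (int a + e)"
    and no_longer: "\<And>k. Ch (bmod n (int v - int k)) k \<in> T \<Longrightarrow> int k \<le> e"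
    and "Sp v \<notin> T"
    and kk: "kk = 1 \<or> Ch v kk \<in> T" and longest: "\<And>k. Ch v k \<in> T \<Longrightarrow> k \<le> kk"
  shows "face_measure v (int kk) < face_measure a e"
proof -
  have "a < n" using d by (simp add: Out_in_darts_iff)
  have "v < n" using v bmod_less n_pos by simp
  have "1 \<le> kk" using kk by (rule one_le_segment_or_chord)
  have v_mod: "(int a + e) mod int n = int v" using v n_pos by (simp add: int_bmod)
  note same = enclosing_after_turn[OF d e v no_longer kk longest]
  show ?thesis
  proof (cases "enclosing a e = {}")
    case True
    have "spoke_gap (int a + e) = spoke_gap (int v)"
      using v_mod \<open>v < n\<close> by (intro spoke_gap_cong) simp
    also have "\<dots> = kk + spoke_gap (int v + int kk)"
      using no_spoke_below_chord[OF kk \<open>v < n\<close> \<open>Sp v \<notin> T\<close>] by (rule spoke_gap_skip)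
    finally show ?thesis using True same \<open>1 \<le> kk\<close> unfolding face_measure_def by simp
  next
    case False
    obtain i k where ik: "innermost (enclosing a e) = (i, k)" by fastforce
    then have "(i, k) \<in> enclosing a e" using innermost_spec[OF False finite_enclosing] by simp
    then obtain c where c: "Ch i k \<in> T" "c mod int n = int i" "c \<le> int a" "int a + e < c + int k"
      using enclosing_beyond_head[OF \<open>a < n\<close> e v no_longer] by blast
    have "k \<le> n" using chord_bounds[OF c(1)] by simp
    then have "(int a - int i) mod int n = int a - c" "(int v - int i) mod int n = int a + e - c"
      using mod_diff_eq_offset[OF c(2) _ c(3)] mod_diff_eq_offset[OF c(2) v_mod] c(3,4) e
        \<open>a < n\<close> by auto
    then show ?thesis
      using False same ik c(4) \<open>1 \<le> kk\<close> unfolding face_measure_def by simp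
  qed
qed

lemma face_arc_closing_dart: "a \<in> T \<Longrightarrow> face_arc (closing_dart a) = a"
proof (cases a)
  case (Ch i k)
  assume "a \<in> T"
  then have "i < n" "2 \<le> k" using Ch chord_bounds by auto
  then show ?thesis using Ch bmod_add_diff_cancel[of i n "int k"] by simp
qed simp

lemma Out_in_darts_closing:
  assumes "Out a e \<in> darts n T" "e < 1"
  obtains p k where "Ch p k \<in> T" "Out a e = closing_dart (Ch p k)"
proof -
  define p where "p = bmod n (int a + e)"
  have "a < n" "e \<le> -2" "Ch p (nat (- e)) \<in> T"
    using assms unfolding p_def by (auto simp: Out_in_darts_iff)
  moreover have "a = bmod n (int p + int (nat (- e)))"
    using bmod_add_diff_cancel[of a n e] calculation(1,2) unfolding p_def by simp
  ultimately show thesis using that[of p "nat (- e)"] by simp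
qed

lemma nxt_Up_Down:
  assumes "Sp i \<in> T"
  obtains J where "Sp J \<in> T" "nxt n T (Up i) = Down J"
proof (cases "\<exists>j. Sp j \<in> T \<and> j < i")
  case True
  have "Max {j. Sp j \<in> T \<and> j < i} \<in> {j. Sp j \<in> T \<and> j < i}" by (rule Max_in) (use True in auto)
  then show thesis using that True by (simp add: nxt_Up)
next
  case False
  have "Max {j. Sp j \<in> T} \<in> {j. Sp j \<in> T}" by (rule Max_in[OF finite_spokes]) (use assms in auto)
  then show thesis using that False by (simp add: nxt_Up)
qed

lemma nxt_forward_face_arc:
  assumes d: "Out a e \<in> darts n T" and e: "1 \<le> e"
  shows "nxt n T (Out a e) \<in> darts n T \<and> face_arc (nxt n T (Out a e)) = face_arc (Out a e)"
proof -
  define v where "v = bmod n (int a + e)"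
  have "a < n" using d by (simp add: Out_in_darts_iff)
  have "v < n" using v_def bmod_less n_pos by simp
  from v_def show ?thesis
  proof (cases rule: forward_dart_cases)
    case (chord_end k0)
    then show ?thesis
      using nxt_forward_to_chord_end[OF e v_def chord_end] chord_bounds[OF chord_end(1)]
        face_arc_forward_to_chord_end[OF \<open>a < n\<close> e v_def chord_end] \<open>v < n\<close>
      by (simp add: Out_in_darts_iff)
  next
    case spoke
    then show ?thesis
      using nxt_forward_to_spoke[OF e v_def spoke] face_arc_forward_to_spoke[OF \<open>a < n\<close> e v_def spoke]
      by simp
  next
    case (turn kk)
    then show ?thesis
      using nxt_forward_turn[OF e v_def turn] face_arc_forward_turn[OF d e v_def turn]
        \<open>v < n\<close> chord_bounds by (auto simp: Out_in_darts_iff)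
  qed
qed

lemma nxt_in_darts_face_arc:
  assumes d: "d \<in> darts n T"
  shows "nxt n T d \<in> darts n T \<and> face_arc (nxt n T d) = face_arc d"
proof (cases d)
  case (Out a e)
  show ?thesis
  proof (cases "1 \<le> e")
    case True then show ?thesis using nxt_forward_face_arc d Out by simp
  next
    case False
    then obtain p k where pk: "Ch p k \<in> T" "d = closing_dart (Ch p k)"
      using Out_in_darts_closing d Out by (metis not_le)
    obtain kk where kk: "kk = 1 \<or> Ch p kk \<in> T" "kk < k" "\<And>j. Ch p j \<in> T \<Longrightarrow> j < k \<Longrightarrow> j \<le> kk"
      using longest_chord_below chord_bounds[OF pk(1)] by blast
    show ?thesis
      using nxt_closing_chord[OF pk(1) kk] face_arc_after_closing_chord[OF pk(1) kk]
        face_arc_closing_dart[OF pk(1)] chord_bounds kk(1) pk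
      by (auto simp: Out_in_darts_iff)
  qed
next
  case (Up i)
  then have "Sp i \<in> T" using d by simp
  moreover obtain J where "Sp J \<in> T" "nxt n T (Up i) = Down J"
    using nxt_Up_Down calculation by blast
  ultimately show ?thesis using Up face_arc_after_Up[of i] by simp
next
  case (Down j)
  then have "Sp j \<in> T" using d by simp
  obtain kk where kk: "kk = 1 \<or> Ch j kk \<in> T" "\<And>k. Ch j k \<in> T \<Longrightarrow> k \<le> kk"
    using longest_chord by blast
  show ?thesis
    using nxt_Down[OF \<open>Sp j \<in> T\<close> kk] face_arc_after_Down[OF \<open>Sp j \<in> T\<close> kk] Down
      spoke_bound[OF \<open>Sp j \<in> T\<close>] chord_bounds kk(1) by (auto simp: Out_in_darts_iff)
qed

lemma forward_reaches_closing_dart: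
  "Out a e \<in> darts n T \<Longrightarrow> 1 \<le> e \<Longrightarrow> \<exists>j. (nxt n T ^^ j) (Out a e) \<in> closing_dart ` T"
proof (induction "face_measure a e" arbitrary: a e rule: less_induct)
  case less
  define v where "v = bmod n (int a + e)"
  have "v < n" using v_def bmod_less n_pos by simp
  from v_def show ?case
  proof (cases rule: forward_dart_cases)
    case (chord_end k0)
    have "Out v (- int k0) = closing_dart (Ch (bmod n (int v - int k0)) k0)"
      using bmod_add_diff_cancel[OF \<open>v < n\<close>, of "- int k0"] by simp
    then have "(nxt n T ^^ 1) (Out a e) \<in> closing_dart ` T"
      using nxt_forward_to_chord_end[OF less.prems(2) v_def chord_end] chord_end(1)
      by (simp add: rev_image_eqI)
    then show ?thesis by blast
  next
    case spoke
    then have "(nxt n T ^^ 1) (Out a e) \<in> closing_dart ` T"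
      using nxt_forward_to_spoke[OF less.prems(2) v_def spoke] by (simp add: rev_image_eqI)
    then show ?thesis by blast
  next
    case (turn kk)
    note step = nxt_forward_turn[OF less.prems(2) v_def turn]
    have "1 \<le> kk" using turn(3) by (rule one_le_segment_or_chord)
    then obtain j where "(nxt n T ^^ j) (Out v (int kk)) \<in> closing_dart ` T"
      using less.hyps[OF face_measure_turn_less[OF less.prems v_def turn]]
        nxt_forward_face_arc[OF less.prems] step by auto
    then have "(nxt n T ^^ Suc j) (Out a e) \<in> closing_dart ` T"
      using step by (simp only: funpow_Suc_right o_apply)
    then show ?thesis by blast
  qed
qed

lemma reaches_closing_dart:
  assumes d: "d \<in> darts n T"
  shows "\<exists>j. (nxt n T ^^ j) d \<in> closing_dart ` T"
proof (cases d)
  case (Out a e)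
  show ?thesis
  proof (cases "1 \<le> e")
    case True then show ?thesis using forward_reaches_closing_dart d Out by simp
  next
    case False
    then have "(nxt n T ^^ 0) d \<in> closing_dart ` T"
      using Out_in_darts_closing d Out by (metis funpow_0 image_eqI not_le)
    then show ?thesis by blast
  qed
next
  case (Up i)
  then have "(nxt n T ^^ 0) d \<in> closing_dart ` T" using d by (simp add: rev_image_eqI)
  then show ?thesis by blast
next
  case (Down j)
  then have "Sp j \<in> T" using d by simp
  obtain kk where kk: "kk = 1 \<or> Ch j kk \<in> T" "\<And>k. Ch j k \<in> T \<Longrightarrow> k \<le> kk"
    using longest_chord by blast
  have "1 \<le> kk" "Out j (int kk) \<in> darts n T"
    using kk spoke_bound[OF \<open>Sp j \<in> T\<close>] chord_bounds by (force simp: Out_in_darts_iff)+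
  then obtain i where "(nxt n T ^^ i) (Out j (int kk)) \<in> closing_dart ` T"
    using forward_reaches_closing_dart by force
  then have "(nxt n T ^^ Suc i) d \<in> closing_dart ` T"
    using nxt_Down[OF \<open>Sp j \<in> T\<close> kk] Down by (simp only: funpow_Suc_right o_apply)
  then show ?thesis by blast
qed

lemma dhead_boundary:
  assumes "d \<in> darts n T" "\<And>i. d \<noteq> Up i"
  obtains v where "dhead n d = V v" "v < n"
  using assms bmod_less[OF n_pos] spoke_bound by (cases d) auto

lemma drev_in_rot:
  assumes d: "d \<in> darts n T" and head: "dhead n d = V v"
  shows "drev n d \<in> rot n T v \<and> dkey (Out v 1) < dkey (drev n d)"
proof (cases d)
  case (Out a e)
  have v: "v = bmod n (int a + e)" and "a < n" using d head Out by (auto simp: Out_in_darts_iff)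
  then have tail: "bmod n (int v - e) = a" using bmod_add_diff_cancel by blast
  have "v < n" using v bmod_less n_pos by simp
  from d Out consider "e = 1" | "2 \<le> e" "Ch a (nat e) \<in> T"
    | "e \<le> -2" "Ch (bmod n (int a + e)) (nat (- e)) \<in> T"
    by (auto simp: Out_in_darts_iff)
  then show ?thesis
    using Out v tail \<open>v < n\<close> unfolding rot_def by cases (auto simp: Out_in_darts_iff)
qed (use d head in \<open>auto simp: rot_def\<close>)

lemma nxt_in_rot:
  assumes d: "d \<in> darts n T" and head: "dhead n d = V v" and "v < n"
  shows "nxt n T d \<in> rot n T v \<and> dkey (nxt n T d) < dkey (drev n d)
    \<and> (\<forall>y\<in>rot n T v. dkey y < dkey (drev n d) \<longrightarrow> dkey y \<le> dkey (nxt n T d))"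
proof -
  define Y where "Y = {y \<in> rot n T v. dkey y < dkey (drev n d)}"
  have "rot n T v \<subseteq> insert (Out v (-1)) (darts n T)" unfolding rot_def by blast
  then have "finite Y" unfolding Y_def using finite_darts by (auto intro: finite_subset)
  moreover have "Out v 1 \<in> Y"
    using drev_in_rot[OF d head] \<open>v < n\<close> unfolding Y_def rot_def by (simp add: Out_in_darts_iff)
  ultimately have "Max (dkey ` Y) \<in> dkey ` Y" by (intro Max_in) auto
  then obtain x where x: "x \<in> Y" "dkey x = Max (dkey ` Y)" by (metis imageE)
  then have x_max: "dkey y \<le> dkey x" if "y \<in> Y" for y using that \<open>finite Y\<close> by simp
  then have "nxt n T d = x"
    using x x_max by (intro nxt_eqI[OF head]) (auto simp: Y_def not_less)
  then show ?thesis using x x_max unfolding Y_def by auto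
qed

lemma inj_on_drev: "inj_on (drev n) (darts n T)"
proof (rule inj_onI)
  fix d1 d2 assume d: "d1 \<in> darts n T" "d2 \<in> darts n T" and eq: "drev n d1 = drev n d2"
  show "d1 = d2"
  proof (cases d1)
    case (Out a e)
    then obtain b where b: "d2 = Out b e" "bmod n (int a + e) = bmod n (int b + e)"
      using eq by (cases d2) auto
    have "a < n" "b < n" using d Out b(1) by (auto simp: Out_in_darts_iff)
    then have "a = b" using bmod_add_diff_cancel[of _ n e] b(2) by metis
    then show ?thesis using Out b(1) by simp
  qed (use eq in \<open>cases d2; auto\<close>)+
qed

lemma dsrc_nxt_Pu_iff:
  assumes "d \<in> darts n T"
  shows "dsrc (nxt n T d) = Pu \<longleftrightarrow> (\<exists>i. d = Up i)"
proof (cases "\<exists>i. d = Up i")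
  case False
  then obtain v where "dhead n d = V v" "v < n" using dhead_boundary assms by blast
  then have "dsrc (nxt n T d) = V v" using nxt_in_rot[OF assms] unfolding rot_def by auto
  then show ?thesis using False by simp
qed (auto simp: nxt_Up)

lemma inj_on_nxt: "inj_on (nxt n T) (darts n T)"
proof (rule inj_onI)
  fix d1 d2 assume d1: "d1 \<in> darts n T" and d2: "d2 \<in> darts n T" and eq: "nxt n T d1 = nxt n T d2"
  have up_iff: "(\<exists>i. d1 = Up i) \<longleftrightarrow> (\<exists>i. d2 = Up i)"
    using dsrc_nxt_Pu_iff[OF d1] dsrc_nxt_Pu_iff[OF d2] eq by simp
  show "d1 = d2"
  proof (cases "\<exists>i. d1 = Up i")
    case True
    then obtain i j where "d1 = Up i" "d2 = Up j" using up_iff by blast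
    then show ?thesis using eq nxt_in_darts_face_arc[OF d1] nxt_in_darts_face_arc[OF d2] by simp
  next
    case False
    obtain v1 v2 where v: "dhead n d1 = V v1" "v1 < n" "dhead n d2 = V v2" "v2 < n"
      using dhead_boundary d1 d2 False up_iff by metis
    note rot1 = nxt_in_rot[OF d1 v(1,2)] and rot2 = nxt_in_rot[OF d2 v(3,4)]
    have "v1 = v2" using rot1 rot2 eq unfolding rot_def by auto
    have r: "drev n d1 \<in> rot n T v1" "drev n d2 \<in> rot n T v1"
      using drev_in_rot[OF d1 v(1)] drev_in_rot[OF d2 v(3)] \<open>v1 = v2\<close> by auto
    have "\<not> dkey (drev n d1) < dkey (drev n d2)"
      using rot1 rot2 eq r(1) \<open>v1 = v2\<close> by force
    moreover have "\<not> dkey (drev n d2) < dkey (drev n d1)"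
      using rot1 rot2 eq r(2) by force
    ultimately have "dkey (drev n d1) = dkey (drev n d2)" by simp
    then have "drev n d1 = drev n d2" using inj_on_dkey_rot r by (auto dest: inj_onD)
    then show ?thesis using inj_on_drev d1 d2 by (auto dest: inj_onD)
  qed
qed

lemma nxt_maps_darts: "nxt n T ` darts n T \<subseteq> darts n T"
  using nxt_in_darts_face_arc by auto

lemma face_subset_darts: "d \<in> darts n T \<Longrightarrow> face n T d \<subseteq> darts n T"
  unfolding face_def using funpow_in[OF nxt_maps_darts] by auto

lemma face_self: "d \<in> face n T d"
  unfolding face_def by (metis (mono_tags, lifting) funpow_0 mem_Collect_eq)

lemma face_eq: "d \<in> darts n T \<Longrightarrow> x \<in> face n T d \<Longrightarrow> face n T x = face n T d"
  unfolding face_def using funpow_orbit_eq[OF finite_darts inj_on_nxt nxt_maps_darts] by blast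

lemma face_arc_face:
  assumes "d \<in> darts n T" "x \<in> face n T d"
  shows "face_arc x = face_arc d"
proof -
  obtain k where "x = (nxt n T ^^ k) d" using assms(2) unfolding face_def by blast
  moreover have "(nxt n T ^^ k) d \<in> darts n T \<and> face_arc ((nxt n T ^^ k) d) = face_arc d"
    by (induction k) (use assms(1) nxt_in_darts_face_arc in auto)
  ultimately show ?thesis by simp
qed

lemma face_reaches_closing_dart:
  assumes "d \<in> darts n T"
  obtains a where "a \<in> T" "face n T d = face n T (closing_dart a)"
proof -
  obtain j a where ja: "a \<in> T" "(nxt n T ^^ j) d = closing_dart a"
    using reaches_closing_dart[OF assms] by blast
  have "closing_dart a \<in> face n T d"
    unfolding face_def using ja(2) by (intro CollectI exI[of _ j]) simp
  then have "face n T (closing_dart a) = face n T d" by (rule face_eq[OF assms])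
  from this[symmetric] show thesis by (rule that[OF ja(1)])
qed

lemma face_closing_dart:
  assumes "a \<in> T"
  shows "face n T (closing_dart a) = {d \<in> darts n T. face_arc d = a}"
proof (intro equalityI subsetI)
  fix x assume x: "x \<in> face n T (closing_dart a)"
  note closing = closing_dart_in_darts[OF assms]
  have "x \<in> darts n T" using face_subset_darts[OF closing] x by blast
  moreover have "face_arc x = a"
    using face_arc_face[OF closing x] face_arc_closing_dart[OF assms] by simp
  ultimately show "x \<in> {d \<in> darts n T. face_arc d = a}" by simp
next
  fix x assume "x \<in> {d \<in> darts n T. face_arc d = a}"
  then have x: "x \<in> darts n T" "face_arc x = a" by auto
  obtain b where b: "b \<in> T" "face n T x = face n T (closing_dart b)"
    using face_reaches_closing_dart[OF x(1)] by blast
  have "closing_dart b \<in> face n T x" using b(2) face_self by simp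
  then have "face_arc (closing_dart b) = face_arc x" by (rule face_arc_face[OF x(1)])
  then have "b = a" using face_arc_closing_dart[OF b(1)] x(2) by simp
  then show "x \<in> face n T (closing_dart a)" using b(2) face_self[of x] by simp
qed

lemma card_faces: "card (faces n T) = card T"
proof -
  have "faces n T = (\<lambda>a. face n T (closing_dart a)) ` T"
    unfolding faces_def using face_reaches_closing_dart closing_dart_in_darts by blast
  moreover have "inj_on (\<lambda>a. face n T (closing_dart a)) T"
  proof (rule inj_onI)
    fix a b assume ab: "a \<in> T" "b \<in> T" "face n T (closing_dart a) = face n T (closing_dart b)"
    then have "closing_dart b \<in> {d \<in> darts n T. face_arc d = a}"
      using face_closing_dart[OF ab(1)] face_self[of "closing_dart b"] by simp
    then show "a = b" using face_arc_closing_dart[OF ab(2)] by simp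
  qed
  ultimately show ?thesis by (simp add: card_image)
qed

lemma sum_card_faces: "(\<Sum>F\<in>faces n T. card F) = card (darts n T)"
proof -
  have "\<Union> (faces n T) = darts n T"
    unfolding faces_def using face_subset_darts face_self by blast
  moreover have "pairwise disjnt (faces n T)"
  proof (rule pairwiseI)
    fix F G assume "F \<in> faces n T" "G \<in> faces n T" "F \<noteq> G"
    then obtain d e where "d \<in> darts n T" "F = face n T d" "e \<in> darts n T" "G = face n T e"
      unfolding faces_def by blast
    then show "disjnt F G" using \<open>F \<noteq> G\<close> face_eq unfolding disjnt_def by blast
  qed
  moreover have "finite F" if "F \<in> faces n T" for F
    using that face_subset_darts finite_darts finite_subset unfolding faces_def by blast
  ultimately show ?thesis using card_Union_disjoint by metis
qed

lemma faces_card_count: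
  assumes "\<forall>F\<in>faces n T. card F = m + 2"
  shows "m * card T = n"
proof -
  have "card T * (m + 2) = n + 2 * card T"
    using sum_card_faces card_darts card_faces assms by simp
  then show ?thesis by (simp add: algebra_simps)
qed

lemma Down_eq_nxt_Up:
  assumes "Sp j \<in> T"
  obtains i where "Sp i \<in> T" "nxt n T (Up i) = Down j"
proof -
  define S where "S = {i. Sp i \<in> T}"
  have "nxt n T (Up i) \<in> Down ` S" if "i \<in> S" for i
    using nxt_Up_Down[of i] that unfolding S_def by (metis image_eqI mem_Collect_eq)
  then have "nxt n T ` (Up ` S) \<subseteq> Down ` S" by auto
  moreover have "card (nxt n T ` (Up ` S)) = card (Down ` S)"
  proof -
    have "inj_on (nxt n T) (Up ` S)"
      by (rule inj_on_subset[OF inj_on_nxt]) (auto simp: S_def)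
    then show ?thesis by (simp add: card_image inj_on_def)
  qed
  moreover have "finite S" unfolding S_def by (rule finite_spokes)
  ultimately have "nxt n T ` (Up ` S) = Down ` S" by (intro card_subset_eq) auto
  moreover have "Down j \<in> Down ` S" using assms unfolding S_def by simp
  ultimately obtain u where "u \<in> Up ` S" "nxt n T u = Down j" by (metis imageE)
  then show thesis using that unfolding S_def by auto
qed

end

section \<open>Spokes at the multiples of \<open>m\<close>\<close>

lemma card_preceding_positions:
  assumes "m \<le> n" "s < n"
  shows "card {i. i < n \<and> (int s - (int i + 1)) mod int n < int m} = m"
proof -
  define h where "h i = bmod n (int s - 1 - int i)" for i
  have h_less: "h i < n" for i unfolding h_def using bmod_less assms(2) by simp
  have hh: "h (h i) = i" if "i < n" for i
  proof -
    have "int (h (h i)) = (int s - 1 - (int s - 1 - int i) mod int n) mod int n"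
      unfolding h_def using assms(2) by (simp add: int_bmod)
    also have "\<dots> = int i" using that by (simp add: mod_diff_right_eq)
    finally show ?thesis by simp
  qed
  have "int (h i) = (int s - (int i + 1)) mod int n" for i
    unfolding h_def using assms(2) by (simp add: int_bmod algebra_simps)
  then have I: "{i. i < n \<and> (int s - (int i + 1)) mod int n < int m} = {i. i < n \<and> h i < m}"
    by (metis (no_types, opaque_lifting) of_nat_less_iff)
  have "inj_on h {i. i < n \<and> h i < m}"
  proof (rule inj_onI)
    fix i j assume "i \<in> {i. i < n \<and> h i < m}" "j \<in> {i. i < n \<and> h i < m}" "h i = h j"
    then show "i = j" using hh by (metis mem_Collect_eq)
  qed
  moreover have "h ` {i. i < n \<and> h i < m} = {..<m}"
  proof (intro equalityI subsetI)
    fix w assume "w \<in> {..<m}"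
    then have "h w \<in> {i. i < n \<and> h i < m}" using hh h_less assms(1) by simp
    then show "w \<in> h ` {i. i < n \<and> h i < m}" using hh[of w] \<open>w \<in> {..<m}\<close> assms(1)
      by (metis image_eqI lessThan_iff order_less_le_trans)
  qed auto
  ultimately show ?thesis unfolding I using card_image by fastforce
qed

locale regular_spokes = arc_system +
  fixes m :: nat
  assumes spokes_eq: "T = {Sp s | s. s < n \<and> m dvd s}"
    and m_pos: "0 < m" and m_dvd: "m dvd n"
begin

lemma spoke_bmod_iff: "Sp (bmod n y) \<in> T \<longleftrightarrow> int m dvd y"
proof -
  have "Sp (bmod n y) \<in> T \<longleftrightarrow> int m dvd int (bmod n y)"
    unfolding spokes_eq using bmod_less[OF n_pos] by simp
  also have "\<dots> \<longleftrightarrow> int m dvd y"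
    using m_dvd n_pos by (simp add: int_bmod dvd_mod_iff)
  finally show ?thesis .
qed

lemma spoke_gap_regular: "spoke_gap x = nat ((- x) mod int m)"
  unfolding spoke_gap_def spoke_bmod_iff
proof (rule Least_equality)
  show "int m dvd x + int (nat ((- x) mod int m))"
    using m_pos by (simp add: dvd_eq_mod_eq_0 mod_add_right_eq)
next
  fix r assume "int m dvd x + int r"
  then obtain q where "x + int r = int m * q" by (elim dvdE)
  then have "- x = int r + (- q) * int m" by (simp add: algebra_simps)
  then have "(- x) mod int m = int r mod int m" by (simp only: mod_mult_self1)
  then show "nat ((- x) mod int m) \<le> r" by (simp flip: of_nat_mod)
qed

lemma next_spoke_regular_iff:
  assumes "s < n" "m dvd s"
  shows "next_spoke x = s \<longleftrightarrow> (int s - x) mod int n < int m"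
proof -
  define u where "u = (- x) mod int m"
  have u: "0 \<le> u" "u < int m" unfolding u_def using m_pos by simp_all
  have "m \<le> n" using m_dvd n_pos by (simp add: dvd_imp_le)
  have next_spoke: "int (next_spoke x) = (x + u) mod int n"
    unfolding next_spoke_def spoke_gap_regular u_def using n_pos m_pos by (simp add: int_bmod)
  show ?thesis
  proof
    assume "next_spoke x = s"
    then have "(int s - x) mod int n = ((x + u) mod int n - x) mod int n" using next_spoke by simp
    also have "\<dots> = u" using u \<open>m \<le> n\<close> by (simp add: mod_diff_left_eq)
    finally show "(int s - x) mod int n < int m" using u by simp
  next
    define w where "w = (int s - x) mod int n"
    assume "(int s - x) mod int n < int m"
    then have w: "0 \<le> w" "w < int m" unfolding w_def using n_pos by simp_all
    obtain c d where cd: "n = m * c" "s = m * d" using m_dvd assms(2) by (auto elim!: dvdE)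
    define q where "q = (int s - x) div int n"
    have split: "int s - x = int n * q + w" unfolding q_def w_def by simp
    then have "- x = w + int m * (int c * q - int d)" using cd by (simp add: algebra_simps)
    then have "u = w" unfolding u_def using w by (simp add: mod_pos_pos_trivial)
    then have "x + u = int s + int n * (- q)" using split by simp
    then have "(x + u) mod int n = int s mod int n" by (simp only: mod_mult_self2)
    then show "next_spoke x = s" using next_spoke assms(1) by simp
  qed
qed

lemma no_chord_regular: "Ch i k \<notin> T"
  using spokes_eq by auto

lemma enclosing_regular: "enclosing a e = {}"
  unfolding enclosing_def using no_chord_regular by auto

lemma darts_regular:
  "d \<in> darts n T \<longleftrightarrow> (\<exists>i<n. d = Out i 1) \<or> (\<exists>j. Sp j \<in> T \<and> (d = Up j \<or> d = Down j))"
  unfolding darts_def using no_chord_regular by auto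

lemma face_arc_Down_eq_iff:
  assumes "Sp s \<in> T" "Sp j \<in> T"
  shows "face_arc (Down j) = Sp s \<longleftrightarrow> Down j = nxt n T (Up s)"
proof -
  obtain i where i: "Sp i \<in> T" "nxt n T (Up i) = Down j" using Down_eq_nxt_Up[OF assms(2)] .
  then have arc: "face_arc (Down j) = Sp i" using face_arc_after_Up by metis
  show ?thesis
  proof
    assume "face_arc (Down j) = Sp s"
    then show "Down j = nxt n T (Up s)" using arc i(2) by simp
  next
    assume "Down j = nxt n T (Up s)"
    then show "face_arc (Down j) = Sp s" using face_arc_after_Up[OF assms(1)] by simp
  qed
qed

lemma face_Up_regular:
  assumes "Sp s \<in> T"
  shows "face n T (Up s) = insert (Up s) (insert (nxt n T (Up s))
    ((\<lambda>i. Out i 1) ` {i. i < n \<and> (int s - (int i + 1)) mod int n < int m}))"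
proof -
  have s: "s < n" "m dvd s" using assms spokes_eq by auto
  have "face n T (Up s) = {d \<in> darts n T. face_arc d = Sp s}"
    using face_closing_dart[OF assms] by simp
  also have "\<dots> = insert (Up s) (insert (nxt n T (Up s))
    ((\<lambda>i. Out i 1) ` {i. i < n \<and> (int s - (int i + 1)) mod int n < int m}))"
  proof (intro equalityI subsetI)
    fix d assume "d \<in> {d \<in> darts n T. face_arc d = Sp s}"
    then show "d \<in> insert (Up s) (insert (nxt n T (Up s))
      ((\<lambda>i. Out i 1) ` {i. i < n \<and> (int s - (int i + 1)) mod int n < int m}))"
      unfolding darts_regular using face_arc_Down_eq_iff[OF assms]
        next_spoke_regular_iff[OF s] enclosing_regular by auto
  next
    fix d assume "d \<in> insert (Up s) (insert (nxt n T (Up s))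
      ((\<lambda>i. Out i 1) ` {i. i < n \<and> (int s - (int i + 1)) mod int n < int m}))"
    then show "d \<in> {d \<in> darts n T. face_arc d = Sp s}"
      using assms nxt_in_darts_face_arc[of "Up s"] next_spoke_regular_iff[OF s]
        enclosing_regular by (auto simp: Out_in_darts_iff)
  qed
  finally show ?thesis .
qed

lemma card_face_regular:
  assumes "a \<in> T"
  shows "card (face n T (closing_dart a)) = m + 2"
proof -
  obtain s where "a = Sp s" "Sp s \<in> T" "s < n" using assms spokes_eq by auto
  moreover obtain J where "nxt n T (Up s) = Down J" using nxt_Up_Down calculation(2) by blast
  moreover have "m \<le> n" using m_dvd n_pos by (simp add: dvd_imp_le)
  ultimately show ?thesis
    using face_Up_regular card_preceding_positions[of m n s]
    by (simp add: card_image inj_on_def image_iff)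
qed

end

lemma angulation_arc_system: "0 < n \<Longrightarrow> angulation m n T \<Longrightarrow> arc_system n T"
  unfolding arc_system_def angulation_def by auto

lemma angulation_card_arcs:
  assumes "0 < n" "angulation m n T"
  shows "m * card T = n" "card (faces n T) = card T" "1 \<le> card T"
proof -
  interpret arc_system n T by (rule angulation_arc_system[OF assms])
  show "m * card T = n" using assms(2) faces_card_count unfolding angulation_def by blast
  show "card (faces n T) = card T" by (rule card_faces)
  have "T \<noteq> {}" using has_spoke by blast
  then show "1 \<le> card T" using finite_arcs by (simp add: Suc_le_eq card_gt_0_iff)
qed

lemma angulation_regular_spokes:
  assumes "0 < m" "0 < n" "m dvd n"
  shows "angulation m n {Sp s | s. s < n \<and> m dvd s}"
proof -
  let ?T = "{Sp s | s. s < n \<and> m dvd s}"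
  interpret regular_spokes n ?T m
  proof unfold_locales
    show "?T \<subseteq> {a. is_arc n a}" by (auto simp: is_arc_def)
    show "\<exists>i. Sp i \<in> ?T" using assms(2) by auto
  qed (use assms in auto)
  have "card F = m + 2" if F: "F \<in> faces n ?T" for F
  proof -
    obtain d where d: "d \<in> darts n ?T" "F = face n ?T d" using F unfolding faces_def by blast
    obtain a where "a \<in> ?T" "face n ?T d = face n ?T (closing_dart a)"
      using face_reaches_closing_dart[OF d(1)] .
    then show ?thesis using card_face_regular d(2) by simp
  qed
  then show ?thesis
    unfolding angulation_def using arcs noncrossing has_spoke by blast
qed

theorem lemma3p2:
  fixes m n :: nat
  assumes "1 \<le> m" and "1 \<le> n"
  shows "((\<exists>T. angulation m n T) \<longleftrightarrow> (\<exists>l::nat. l \<ge> 1 \<and> n = m * l))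
         \<and> (\<forall>(l::nat) T. n = m * l \<longrightarrow> angulation m n T \<longrightarrow> card (faces n T) = l)"
proof (intro conjI allI impI iffI)
  assume "\<exists>T. angulation m n T"
  then obtain T where T: "angulation m n T" by blast
  have "0 < n" using assms(2) by simp
  note card_T = angulation_card_arcs[OF this T]
  show "\<exists>l \<ge> 1. n = m * l" using card_T(1,3) by (intro exI[of _ "card T"]) simp
next
  assume "\<exists>l \<ge> 1. n = m * l"
  then have "m dvd n" by auto
  moreover have "0 < m" "0 < n" using assms by simp_all
  ultimately show "\<exists>T. angulation m n T" using angulation_regular_spokes by blast
next
  fix l T assume "n = m * l" "angulation m n T"
  then show "card (faces n T) = l" using angulation_card_arcs[of n m T] assms by simp
qed

end
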